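(* Let $p>2$ be a prime, $q=p^h$, and let $\mathcal{F}$ be the projective closure of $ax^ny^m+x^n+y^m=1$ over $\mathbb{F}_q$, where $a\in\mathbb{F}_q$, $a\neq0$, $a\neq-1$. Then for all positive integers $m,n$ with $p\nmid mn$, $\mathcal{F}$ is classical with respect to lines.
   Context: With $\varphi=(1,x,y)$, $\tau$ a separating element of the function field and $D^{(k)}_\tau$ Hasse derivatives, the order sequence w.r.t. lines is the lexicographically smallest $\varepsilon_0<\varepsilon_1<\varepsilon_2$ with $\det(D^{(\varepsilon_i)}_\tau\varphi_j)\neq0$; the curve is classical w.r.t. lines if this sequence is $(0,1,2)$. *)

theory Defs
  imports "HOL-Computational_Algebra.Polynomial" "HOL-Library.Product_Lexorder"
begin

inductive_set gen_field :: "'a::field set \<Rightarrow> 'a set" for S where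
  base: "s \<in> S \<Longrightarrow> s \<in> gen_field S"
| zero: "0 \<in> gen_field S"
| one: "1 \<in> gen_field S"
| add: "u \<in> gen_field S \<Longrightarrow> v \<in> gen_field S \<Longrightarrow> u + v \<in> gen_field S"
| neg: "u \<in> gen_field S \<Longrightarrow> - u \<in> gen_field S"
| mult: "u \<in> gen_field S \<Longrightarrow> v \<in> gen_field S \<Longrightarrow> u * v \<in> gen_field S"
| inv: "u \<in> gen_field S \<Longrightarrow> inverse u \<in> gen_field S"

definition field_emb :: "('k::field \<Rightarrow> 'L::field) \<Rightarrow> bool" where
  "field_emb \<iota> \<longleftrightarrow> \<iota> 1 = 1 \<and> (\<forall>u v. \<iota> (u + v) = \<iota> u + \<iota> v) \<and> (\<forall>u v. \<iota> (u * v) = \<iota> u * \<iota> v)"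

text \<open>Hasse derivatives D k = D^(k)_tau on L (over the constants range iota), with respect to tau.\<close>
definition hasse_derivs :: "('k::field \<Rightarrow> 'L::field) \<Rightarrow> 'L \<Rightarrow> (nat \<Rightarrow> 'L \<Rightarrow> 'L) \<Rightarrow> bool" where
  "hasse_derivs \<iota> \<tau> D \<longleftrightarrow>
     (\<forall>u. D 0 u = u) \<and>
     (\<forall>k u v. D k (u + v) = D k u + D k v) \<and>
     (\<forall>k u v. D k (u * v) = (\<Sum>i\<le>k. D i u * D (k - i) v)) \<and>
     (\<forall>k c. k > 0 \<longrightarrow> D k (\<iota> c) = 0) \<and>
     (\<forall>i j u. D i (D j u) = of_nat ((i + j) choose i) * D (i + j) u) \<and>
     D 1 \<tau> = 1 \<and> (\<forall>k\<ge>2. D k \<tau> = 0)"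

definition det3 :: "(nat \<Rightarrow> nat \<Rightarrow> 'a::comm_ring_1) \<Rightarrow> 'a" where
  "det3 M = M 0 0 * M 1 1 * M 2 2 + M 0 1 * M 1 2 * M 2 0 + M 0 2 * M 1 0 * M 2 1
          - M 0 2 * M 1 1 * M 2 0 - M 0 0 * M 1 2 * M 2 1 - M 0 1 * M 1 0 * M 2 2"

definition line_wronskian :: "(nat \<Rightarrow> 'L::field \<Rightarrow> 'L) \<Rightarrow> 'L \<Rightarrow> 'L \<Rightarrow> nat \<times> nat \<times> nat \<Rightarrow> 'L" where
  "line_wronskian D x y e =
     (case e of (e0, e1, e2) \<Rightarrow>
       det3 (\<lambda>i j. D ([e0, e1, e2] ! i) ([1, x, y] ! j)))"

definition line_order_seq :: "(nat \<Rightarrow> 'L::field \<Rightarrow> 'L) \<Rightarrow> 'L \<Rightarrow> 'L \<Rightarrow> nat \<times> nat \<times> nat" where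
  "line_order_seq D x y =
     (LEAST e. (case e of (e0, e1, e2) \<Rightarrow> e0 < e1 \<and> e1 < e2) \<and> line_wronskian D x y e \<noteq> 0)"

definition classical_wrt_lines :: "(nat \<Rightarrow> 'L::field \<Rightarrow> 'L) \<Rightarrow> 'L \<Rightarrow> 'L \<Rightarrow> bool" where
  "classical_wrt_lines D x y \<longleftrightarrow> line_order_seq D x y = (0, 1, 2)"

end

theory Submission
  imports Defs "HOL-Number_Theory.Residues"
begin

(* The first Hasse derivative d = D 1 is a derivation killing the constants, and
   2 D 2 = d o d, so twice the Wronskian of (1, x, y) at orders (0, 1, 2) is
   d x * d (d y) - d y * d (d x) = (d x)^2 * d (d y / d x).  Implicit differentiation of
   A X Y + X + Y = 1 (X = x^n, Y = y^m, A = iota a) shows that d x = 0 would force d y = 0, so d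
   would vanish on the whole function field although d tau = 1.  Hence e = d / d x is a
   derivation with e x = 1, and differentiating the curve equation twice gives
   m^2 x^2 P^2 e (e y) = n (1 + A) X y Q  with  P = (1 - X)(1 + A X),
   Q = m (1 - n) + (n (1 + A) + m (A - 1)) X - m (n + 1) A X^2.
   The coefficients of Q do not all vanish in F_q because p does not divide 2 m and a <> 0,
   so Q <> 0 as x is transcendental over F_q; the other factors are nonzero likewise. *)

locale field_derivation =
  fixes d :: "'a::field \<Rightarrow> 'a"
  assumes add [simp]: "d (u + v) = d u + d v"
    and mult [simp]: "d (u * v) = u * d v + d u * v"
begin

lemma zero [simp]: "d 0 = 0"
  using add[of 0 0] by (metis add_cancel_left_right add_0)

lemma one [simp]: "d 1 = 0"
  using mult[of 1 1] by (metis add_cancel_left_right mult_1 mult_1_right)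

lemma minus [simp]: "d (- u) = - d u"
  using add[of u "- u"] by (simp add: eq_neg_iff_add_eq_0 add.commute)

lemma diff [simp]: "d (u - v) = d u - d v"
  using add[of u "- v"] by simp

lemma of_nat [simp]: "d (of_nat k) = 0"
  by (induction k) simp_all

lemma power: "d (z ^ k) = of_nat k * z ^ (k - 1) * d z"
proof (induction k)
  case (Suc k)
  then show ?case by (cases k) (simp_all add: algebra_simps)
qed simp

lemma mult_power: "z * d (z ^ k) = of_nat k * z ^ k * d z"
proof (cases k)
  case (Suc j)
  have "z * d (z ^ k) = z * (of_nat k * z ^ (k - 1) * d z)"
    by (simp only: power)
  also have "\<dots> = of_nat k * z ^ k * d z"
    using Suc by (simp add: algebra_simps)
  finally show ?thesis .
qed simp

lemma inverse: "d (inverse u) = - d u * inverse u ^ 2"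
proof (cases "u = 0")
  case False
  have "0 = d (u * inverse u)" using False by simp
  also have "\<dots> = u * d (inverse u) + d u * inverse u" by simp
  finally have "u * d (inverse u) = - (d u * inverse u)"
    by (simp add: eq_neg_iff_add_eq_0)
  then have "inverse u * (u * d (inverse u)) = - d u * inverse u ^ 2"
    by (simp add: power2_eq_square)
  then show ?thesis using False by (simp add: mult.assoc[symmetric])
qed simp

lemma divide: "d (u / v) = (d u * v - u * d v) / v ^ 2"
proof (cases "v = 0")
  case False
  have "d (u / v) = u * d (inverse v) + d u * inverse v"
    by (simp only: divide_inverse mult)
  also have "\<dots> = u * (- d v * inverse v ^ 2) + d u * inverse v"
    by (simp only: inverse)
  also have "\<dots> = (d u * v - u * d v) / v ^ 2"
    using False by (simp add: field_simps power2_eq_square)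
  finally show ?thesis .
qed simp

lemma vanishes_on_gen_field:
  assumes "\<forall>s\<in>S. d s = 0" and "z \<in> gen_field S"
  shows "d z = 0"
  using assms(2) by induction (simp_all add: assms(1) inverse)

lemma field_derivation_divide: "field_derivation (\<lambda>z. d z / c)"
  by unfold_locales (simp_all add: add_divide_distrib)

lemma curve_first_derivative:
  fixes A x y :: 'a and m n :: nat
  assumes curve: "A * x ^ n * y ^ m + x ^ n + y ^ m = 1" and const: "d A = 0"
  shows "of_nat m * x * ((1 - x ^ n) * (1 + A * x ^ n)) * d y
    = - (of_nat n * (1 + A) * x ^ n * y * d x)"
proof -
  define X Y where "X = x ^ n" and "Y = y ^ m"
  have rel: "A * X * Y + X + Y = 1"
    using curve by (simp add: X_def Y_def)
  have dX: "x * d X = of_nat n * X * d x" and dY: "y * d Y = of_nat m * Y * d y"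
    unfolding X_def Y_def by (fact mult_power)+
  have "0 = d (A * X * Y + X + Y)"
    using rel by simp
  also have "\<dots> = (1 + A * Y) * d X + (1 + A * X) * d Y"
    using const by (simp add: algebra_simps)
  finally have drel: "(1 + A * X) * d Y = - ((1 + A * Y) * d X)"
    by (simp add: eq_neg_iff_add_eq_0 add.commute)
  have "1 - X = (A * X * Y + X + Y) - X"
    by (simp only: rel)
  then have Y_rel: "1 - X = Y * (1 + A * X)"
    by (simp add: algebra_simps)
  have "(1 + A * Y) * (1 + A * X) = 1 + A * (A * X * Y + X + Y)"
    by (simp add: algebra_simps)
  then have AY_rel: "(1 + A * Y) * (1 + A * X) = 1 + A"
    by (simp add: rel)
  have "of_nat m * x * ((1 - X) * (1 + A * X)) * d y
      = x * (1 + A * X) * ((1 + A * X) * (of_nat m * Y * d y))"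
    unfolding Y_rel by (simp add: algebra_simps)
  also have "\<dots> = x * (1 + A * X) * ((1 + A * X) * d Y) * y"
    unfolding dY[symmetric] by (simp add: algebra_simps)
  also have "\<dots> = - ((1 + A * Y) * (1 + A * X)) * (x * d X) * y"
    unfolding drel by (simp add: algebra_simps)
  also have "\<dots> = - (of_nat n * (1 + A) * X * y * d x)"
    unfolding AY_rel dX by (simp add: algebra_simps)
  finally show ?thesis
    by (simp add: X_def)
qed

lemma curve_second_derivative:
  fixes A x y :: 'a and m n :: nat
  assumes curve: "A * x ^ n * y ^ m + x ^ n + y ^ m = 1" and const: "d A = 0" and dx: "d x = 1"
  shows "of_nat m ^ 2 * x ^ 2 * ((1 - x ^ n) * (1 + A * x ^ n)) ^ 2 * d (d y)
    = of_nat n * (1 + A) * x ^ n * y *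
      (of_nat m * (1 - of_nat n) + (of_nat n * (1 + A) + of_nat m * (A - 1)) * x ^ n
        - of_nat m * (of_nat n + 1) * A * (x ^ n) ^ 2)"
proof -
  define X P K where "X = x ^ n" and "P = (1 - X) * (1 + A * X)" and "K = of_nat n * (1 + A)"
  have first: "of_nat m * x * P * d y = - (K * X * y)"
    using curve_first_derivative[OF curve const] dx by (simp add: X_def P_def K_def)
  have dX: "x * d X = of_nat n * X"
    using mult_power[of x n] dx by (simp add: X_def)
  have dP: "x * d P = of_nat n * X * (A - 1 - 2 * A * X)"
  proof -
    have "d P = (A - 1 - 2 * A * X) * d X"
      using const by (simp add: P_def algebra_simps)
    then have "x * d P = (A - 1 - 2 * A * X) * (x * d X)"
      by simp
    then show ?thesis
      unfolding dX by (simp add: algebra_simps)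
  qed
  have second: "of_nat m * (x * P * d (d y) + (P + x * d P) * d y) = - (K * (X * d y + d X * y))"
    using arg_cong[OF first, of d] const dx by (simp add: K_def algebra_simps)
  have "of_nat m ^ 2 * x ^ 2 * P ^ 2 * d (d y)
      = of_nat m * x * P * (of_nat m * (x * P * d (d y) + (P + x * d P) * d y))
        - of_nat m * (P + x * d P) * (of_nat m * x * P * d y)"
    by (simp add: algebra_simps power2_eq_square)
  also have "\<dots> = - (K * X) * (of_nat m * x * P * d y) - K * of_nat m * P * y * (x * d X)
      - of_nat m * (P + x * d P) * (of_nat m * x * P * d y)"
    unfolding second by (simp add: algebra_simps)
  also have "\<dots> = K * X * y * (of_nat m * (1 - of_nat n) + (K + of_nat m * (A - 1)) * X
      - of_nat m * (of_nat n + 1) * A * X ^ 2)"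
    unfolding first dX dP by (simp add: P_def algebra_simps power2_eq_square)
  finally show ?thesis
    by (simp add: X_def P_def K_def)
qed


lemma curve_wronskian_ne_0:
  fixes A x y :: 'a and m n :: nat
  assumes curve: "A * x ^ n * y ^ m + x ^ n + y ^ m = 1" and const: "d A = 0" and "d x \<noteq> 0"
    and "of_nat m \<noteq> (0 :: 'a)" and "of_nat n \<noteq> (0 :: 'a)" and "1 + A \<noteq> 0"
    and "x \<noteq> 0" and "y \<noteq> 0" and "(1 - x ^ n) * (1 + A * x ^ n) \<noteq> 0"
    and "of_nat m * (1 - of_nat n) + (of_nat n * (1 + A) + of_nat m * (A - 1)) * x ^ n
      - of_nat m * (of_nat n + 1) * A * (x ^ n) ^ 2 \<noteq> 0"
  shows "d x * d (d y) - d y * d (d x) \<noteq> 0"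
proof -
  interpret e: field_derivation "\<lambda>z. d z / d x"
    by (rule field_derivation_divide)
  have "of_nat m ^ 2 * x ^ 2 * ((1 - x ^ n) * (1 + A * x ^ n)) ^ 2 * (d (d y / d x) / d x) \<noteq> 0"
    using e.curve_second_derivative[OF curve] const assms(3-) by simp
  then have "d (d y / d x) \<noteq> 0"
    by simp
  then show ?thesis
    using divide[of "d y" "d x"] \<open>d x \<noteq> 0\<close> by (simp add: field_simps)
qed

end

lemma hasse_derivs_first_order:
  assumes "hasse_derivs \<iota> \<tau> D"
  shows "field_derivation (D 1)" and "D 1 (\<iota> c) = 0" and "D 1 \<tau> = 1"
proof -
  have "D 1 (u * v) = u * D 1 v + D 1 u * v" for u v
    using assms by (simp add: hasse_derivs_def atMost_Suc)
  then show "field_derivation (D 1)"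
    using assms by unfold_locales (simp_all add: hasse_derivs_def)
  show "D 1 (\<iota> c) = 0" and "D 1 \<tau> = 1"
    using assms by (simp_all add: hasse_derivs_def)
qed

lemma hasse_deriv_x_ne_0_on_curve:
  fixes \<iota> :: "'k::field \<Rightarrow> 'L::field"
  assumes H: "hasse_derivs \<iota> \<tau> D" and gen: "gen_field (range \<iota> \<union> {x, y}) = UNIV"
    and curve: "\<iota> a * x ^ n * y ^ m + x ^ n + y ^ m = 1"
    and "(of_nat m :: 'L) \<noteq> 0" and "x \<noteq> 0" and "(1 - x ^ n) * (1 + \<iota> a * x ^ n) \<noteq> 0"
  shows "D 1 x \<noteq> 0"
proof
  interpret field_derivation "D 1"
    by (rule hasse_derivs_first_order(1)[OF H])
  assume "D 1 x = 0"
  then have "D 1 y = 0"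
    using curve_first_derivative[OF curve hasse_derivs_first_order(2)[OF H]] assms(4-) by simp
  then have "D 1 \<tau> = 0"
    using vanishes_on_gen_field[of "range \<iota> \<union> {x, y}" \<tau>] \<open>D 1 x = 0\<close> gen
      hasse_derivs_first_order(2)[OF H] by auto
  then show False
    using hasse_derivs_first_order(3)[OF H] by simp
qed

lemma line_wronskian_012:
  assumes "hasse_derivs \<iota> \<tau> D"
  shows "2 * line_wronskian D x y (0, 1, 2) = D 1 x * D 1 (D 1 y) - D 1 y * D 1 (D 1 x)"
proof -
  interpret field_derivation "D 1"
    by (rule hasse_derivs_first_order(1)[OF assms])
  have D0: "D 0 u = u" and "D 1 (D 1 u) = of_nat (2 choose 1) * D 2 u" for u
    using assms unfolding hasse_derivs_def one_add_one[symmetric] by blast+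
  then have D11: "D 1 (D 1 u) = 2 * D 2 u" for u
    by simp
  have "D 2 1 = D 2 (1 * 1)"
    by simp
  also have "\<dots> = (\<Sum>i\<le>2. D i 1 * D (2 - i) 1)"
    using assms unfolding hasse_derivs_def by blast
  also have "\<dots> = D 2 1 + D 2 1"
    using one by (simp add: atMost_Suc D0 numeral_2_eq_2)
  finally have D21: "D 2 1 = 0"
    by (metis add.right_neutral add_left_cancel)
  have W: "line_wronskian D x y (0, 1, 2) = D 1 x * D 2 y - D 1 y * D 2 x"
    using one D21 by (simp add: line_wronskian_def det3_def D0 One_nat_def)
  show ?thesis
    unfolding W D11 by (simp add: algebra_simps)
qed

lemma classical_wrt_linesI:
  assumes "line_wronskian D x y (0, 1, 2) \<noteq> 0"
  shows "classical_wrt_lines D x y"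
  unfolding classical_wrt_lines_def line_order_seq_def
proof (rule Least_equality)
  fix e :: "nat \<times> nat \<times> nat"
  assume "(case e of (e0, e1, e2) \<Rightarrow> e0 < e1 \<and> e1 < e2) \<and> line_wronskian D x y e \<noteq> 0"
  then show "(0, 1, 2) \<le> e"
    by (cases e) (auto simp: less_eq_prod_def)
qed (use assms in simp)

lemma field_emb_hom:
  assumes "field_emb \<iota>"
  shows "\<iota> 0 = 0" and "\<iota> 1 = 1" and "\<iota> (u + v) = \<iota> u + \<iota> v" and "\<iota> (u * v) = \<iota> u * \<iota> v"
    and "\<iota> (- u) = - \<iota> u" and "\<iota> (u - v) = \<iota> u - \<iota> v" and "\<iota> (of_nat k) = of_nat k"
proof -
  show add: "\<iota> (u + v) = \<iota> u + \<iota> v" for u v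
    using assms by (simp add: field_emb_def)
  show "\<iota> (u * v) = \<iota> u * \<iota> v" and one: "\<iota> 1 = 1"
    using assms by (simp_all add: field_emb_def)
  show zero: "\<iota> 0 = 0"
    using add[of 0 0] by (metis add.right_neutral add_left_cancel)
  show minus: "\<iota> (- u) = - \<iota> u" for u
    using add[of u "- u"] zero by (simp add: eq_neg_iff_add_eq_0 add.commute)
  show "\<iota> (u - v) = \<iota> u - \<iota> v"
    using add[of u "- v"] minus[of v] by simp
  show "\<iota> (of_nat k) = of_nat k"
    by (induction k) (simp_all add: zero one add)
qed

lemma field_emb_eq_0_iff:
  assumes "field_emb \<iota>"
  shows "\<iota> u = 0 \<longleftrightarrow> u = 0"
proof
  assume "\<iota> u = 0"
  then have "\<iota> (u * inverse u) = 0"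
    using field_emb_hom(4)[OF assms] by simp
  then show "u = 0"
    using field_emb_hom(1,2)[OF assms] by (cases "u = 0") simp_all
qed (simp add: field_emb_hom(1)[OF assms])

lemma field_emb_of_nat_eq_0_iff:
  fixes \<iota> :: "'k::field \<Rightarrow> 'L::field"
  assumes "field_emb \<iota>"
  shows "(of_nat k :: 'L) = 0 \<longleftrightarrow> (of_nat k :: 'k) = 0"
  using field_emb_eq_0_iff[OF assms, of "of_nat k"] field_emb_hom(7)[OF assms] by simp

lemma CHAR_eq_if_card_prime_power:
  assumes "prime p" and "card (UNIV :: 'a::{field,finite} set) = p ^ h"
  shows "CHAR('a) = p"
proof -
  have "prime CHAR('a)"
    by (rule prime_CHAR_semidom) (simp add: finite_imp_CHAR_pos)
  moreover have "CHAR('a) dvd p ^ h"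
    using CHAR_dvd_CARD[where 'a='a] assms(2) by simp
  ultimately show ?thesis
    using assms(1) prime_dvd_power primes_dvd_imp_eq by blast
qed

lemma map_poly_add:
  assumes "f 0 = 0" and "\<And>u v. f (u + v) = f u + f v"
  shows "map_poly f (g + h) = map_poly f g + map_poly f h"
  by (rule poly_eqI) (simp add: coeff_map_poly assms)

definition transcendental_over :: "('k::field \<Rightarrow> 'L::field) \<Rightarrow> 'L \<Rightarrow> bool" where
  "transcendental_over \<iota> x \<longleftrightarrow> (\<forall>g :: 'k poly. g \<noteq> 0 \<longrightarrow> poly (map_poly \<iota> g) x \<noteq> 0)"

lemma transcendental_quadratic_ne_0:
  fixes \<iota> :: "'k::field \<Rightarrow> 'L::field"
  assumes emb: "field_emb \<iota>" and transc: "transcendental_over \<iota> x"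
    and "n > 0" and "c0 \<noteq> 0 \<or> c1 \<noteq> 0 \<or> c2 \<noteq> 0"
  shows "\<iota> c0 + \<iota> c1 * x ^ n + \<iota> c2 * (x ^ n) ^ 2 \<noteq> 0"
proof -
  define g where "g = Polynomial.monom c0 0 + Polynomial.monom c1 n + Polynomial.monom c2 (2 * n)"
  have "Polynomial.coeff g 0 = c0" "Polynomial.coeff g n = c1" "Polynomial.coeff g (2 * n) = c2"
    using \<open>n > 0\<close> by (auto simp: g_def)
  then have "g \<noteq> 0"
    using assms(4) by auto
  moreover have "map_poly \<iota> g = Polynomial.monom (\<iota> c0) 0 + Polynomial.monom (\<iota> c1) n + Polynomial.monom (\<iota> c2) (2 * n)"
    unfolding g_def using field_emb_hom(1,3)[OF emb]
    by (simp add: map_poly_add map_poly_monom)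
  ultimately show ?thesis
    using transc by (auto simp: transcendental_over_def poly_monom power_mult[symmetric] mult.commute)
qed

lemma curve_coordinates_nonzero:
  fixes \<iota> :: "'k::field \<Rightarrow> 'L::field"
  assumes emb: "field_emb \<iota>" and transc: "transcendental_over \<iota> x"
    and n: "n > 0" and "m > 0" and "a \<noteq> 0"
    and curve: "\<iota> a * x ^ n * y ^ m + x ^ n + y ^ m = 1"
  shows "x \<noteq> 0" and "y \<noteq> 0" and "(1 - x ^ n) * (1 + \<iota> a * x ^ n) \<noteq> 0"
proof -
  note hom = field_emb_hom[OF emb]
  have "x ^ n \<noteq> 0"
    using transcendental_quadratic_ne_0[OF emb transc n, of 0 1 0] by (simp add: hom)
  then show "x \<noteq> 0"
    using n by auto
  have X1: "1 - x ^ n \<noteq> 0"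
    using transcendental_quadratic_ne_0[OF emb transc n, of 1 "- 1" 0] by (simp add: hom)
  moreover have "1 + \<iota> a * x ^ n \<noteq> 0"
    using transcendental_quadratic_ne_0[OF emb transc n, of 1 a 0] \<open>a \<noteq> 0\<close> by (simp add: hom)
  ultimately show "(1 - x ^ n) * (1 + \<iota> a * x ^ n) \<noteq> 0"
    by simp
  show "y \<noteq> 0"
  proof
    assume "y = 0"
    then have "x ^ n = 1"
      using curve \<open>m > 0\<close> by (simp add: zero_power)
    with X1 show False
      by simp
  qed
qed

lemma curve_quadratic_ne_0:
  fixes \<iota> :: "'k::field \<Rightarrow> 'L::field"
  assumes emb: "field_emb \<iota>" and transc: "transcendental_over \<iota> x"
    and "n > 0" and "a \<noteq> 0" and "(of_nat m :: 'k) \<noteq> 0" and "(2 :: 'k) \<noteq> 0"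
  shows "of_nat m * (1 - of_nat n) + (of_nat n * (1 + \<iota> a) + of_nat m * (\<iota> a - 1)) * x ^ n
    - of_nat m * (of_nat n + 1) * \<iota> a * (x ^ n) ^ 2 \<noteq> 0"
proof -
  define c0 c1 c2 :: 'k
    where "c0 = of_nat m * (1 - of_nat n)" and "c1 = of_nat n * (1 + a) + of_nat m * (a - 1)"
      and "c2 = - (of_nat m * (of_nat n + 1) * a)"
  have "c0 \<noteq> 0 \<or> c2 \<noteq> 0"
  proof (rule ccontr)
    assume "\<not> (c0 \<noteq> 0 \<or> c2 \<noteq> 0)"
    then have zeros: "1 - of_nat n = (0 :: 'k)" "of_nat n + 1 = (0 :: 'k)"
      using assms(4,5) by (simp_all add: c0_def c2_def)
    have "(2 :: 'k) = (1 - of_nat n) + (of_nat n + 1)"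
      by simp
    also have "\<dots> = 0"
      unfolding zeros by simp
    finally show False
      using assms(6) by simp
  qed
  then have "\<iota> c0 + \<iota> c1 * x ^ n + \<iota> c2 * (x ^ n) ^ 2 \<noteq> 0"
    using transcendental_quadratic_ne_0[OF emb transc \<open>n > 0\<close>] by blast
  then show ?thesis
    by (simp add: c0_def c1_def c2_def field_emb_hom[OF emb] algebra_simps)
qed

theorem proposition4p1:
  fixes p h m n :: nat and a :: "'k::{field,finite}"
    and \<iota> :: "'k \<Rightarrow> 'L::field" and x y \<tau> :: 'L and D :: "nat \<Rightarrow> 'L \<Rightarrow> 'L"
  assumes "prime p" and "p > 2" and "h > 0" and "card (UNIV :: 'k set) = p ^ h"
    and "a \<noteq> 0" and "a \<noteq> -1"
    and "m > 0" and "n > 0" and "\<not> p dvd m * n"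
    and "field_emb \<iota>"
    and "\<forall>g :: 'k poly. g \<noteq> 0 \<longrightarrow> poly (map_poly \<iota> g) x \<noteq> 0"
    and "\<iota> a * x ^ n * y ^ m + x ^ n + y ^ m = 1"
    and "gen_field (range \<iota> \<union> {x, y}) = UNIV"
    and "hasse_derivs \<iota> \<tau> D"
  shows "classical_wrt_lines D x y"
proof -
  note emb = assms(10) and curve = assms(12) and H = assms(14)
  have transc: "transcendental_over \<iota> x"
    using assms(11) by (simp add: transcendental_over_def)
  interpret d: field_derivation "D 1"
    by (rule hasse_derivs_first_order(1)[OF H])
  have char: "(of_nat j :: 'k) = 0 \<longleftrightarrow> p dvd j" for j
    using CHAR_eq_if_card_prime_power[OF assms(1,4)] by (simp add: of_nat_eq_0_iff_char_dvd)
  have "\<not> p dvd 2"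
    using assms(2) by (auto dest: dvd_imp_le)
  then have "(2 :: 'k) \<noteq> 0" and m: "(of_nat m :: 'k) \<noteq> 0" and n: "(of_nat n :: 'k) \<noteq> 0"
    using char[of 2] char[of m] char[of n] assms(9) by auto
  then have "of_nat m * (1 - of_nat n) + (of_nat n * (1 + \<iota> a) + of_nat m * (\<iota> a - 1)) * x ^ n
      - of_nat m * (of_nat n + 1) * \<iota> a * (x ^ n) ^ 2 \<noteq> 0"
    using curve_quadratic_ne_0[OF emb transc] assms(5,8) by blast
  moreover have "1 + \<iota> a \<noteq> 0"
    using assms(6) field_emb_eq_0_iff[OF emb, of "1 + a"]
    by (simp add: field_emb_hom[OF emb] add_eq_0_iff)
  moreover have "(of_nat m :: 'L) \<noteq> 0" and "(of_nat n :: 'L) \<noteq> 0"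
    using m n field_emb_of_nat_eq_0_iff[OF emb] by blast+
  moreover note curve_coordinates_nonzero[OF emb transc assms(8,7,5) curve]
  moreover have "D 1 x \<noteq> 0"
    using hasse_deriv_x_ne_0_on_curve[OF H assms(13) curve] calculation by blast
  ultimately have "D 1 x * D 1 (D 1 y) - D 1 y * D 1 (D 1 x) \<noteq> 0"
    using d.curve_wronskian_ne_0[OF curve hasse_derivs_first_order(2)[OF H]] by blast
  then show ?thesis
    by (intro classical_wrt_linesI) (metis line_wronskian_012[OF H] mult_zero_right)
qed

end
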